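(* Given any pair $\mathbf v=(v_1,v_2)$ with $1\ge v_1>v_2\ge 0$, there is one and only one real cubic polynomial $f$ with $f(0)=0$ and $f(1)=1$ which has two critical points $c_1<c_2$ in the open interval $(0,1)$ with critical values $f(c_1)=v_1$ and $f(c_2)=v_2$. *)

theory Defs
  imports "HOL-Computational_Algebra.Polynomial"
begin

end

theory Submission
  imports Defs
begin

text \<open>
  A cubic f with f 0 = 0 and critical points c1 < c2 has f' = 3 k (t - c1) (t - c2), so it is
  determined by k, c1 and c2. Measured in the unit d = c2 - c1, the drop f c1 - f c2 equals
  k d^3 / 2, while the rises f c1 - f 0 and f 1 - f c2 equal k d^3 / 2 times rise x and rise y,
  where x = c1 / d, y = (1 - c2) / d and rise s = 2 s^3 + 3 s^2. Hence
  rise x = v1 / (v1 - v2) and rise y = (1 - v2) / (v1 - v2). Since rise is an increasing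
  bijection of the positive reals, x and y, and then d = 1 / (1 + x + y), c1, c2 and k are
  uniquely determined, and every choice they allow is realised.
\<close>

text \<open>For q t = 2 t^3 - 3 t^2, whose critical points are 0 and 1, rise s = q 0 - q (-s) = q (1 + s) - q 1.\<close>

definition rise :: "real \<Rightarrow> real" where
  "rise x = 2 * x ^ 3 + 3 * x ^ 2"

lemma strict_mono_on_rise: "strict_mono_on {0..} rise"
proof (rule strict_mono_onI)
  fix x y :: real
  assume "x \<in> {0..}" "x < y"
  then have "x ^ 3 < y ^ 3" "x ^ 2 < y ^ 2"
    by (auto intro!: power_strict_mono)
  then show "rise x < rise y"
    unfolding rise_def by simp
qed

lemma inj_on_rise: "inj_on rise {0..}"
  using strict_mono_on_rise by (rule strict_mono_on_imp_inj_on)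

lemma rise_surj_pos:
  assumes "0 < r"
  obtains x where "0 < x" "rise x = r"
proof -
  have "r \<le> 3 * (r + 1) ^ 2" "0 \<le> (r + 1) ^ 3"
    using assms by (simp_all add: power2_eq_square algebra_simps)
  then have "r \<le> rise (r + 1)"
    unfolding rise_def by linarith
  moreover have "rise 0 \<le> r"
    using assms by (simp add: rise_def)
  moreover have "\<forall>x. 0 \<le> x \<and> x \<le> r + 1 \<longrightarrow> isCont rise x"
    unfolding rise_def by (auto intro!: continuous_intros)
  ultimately obtain x where "0 \<le> x" "rise x = r"
    using IVT[of rise 0 r "r + 1"] assms by auto
  moreover have "x \<noteq> 0"
    using calculation assms by (auto simp: rise_def)
  ultimately show thesis
    by (intro that) auto
qed

definition crit_cubic :: "real \<Rightarrow> real \<Rightarrow> real \<Rightarrow> real poly" where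
  "crit_cubic k a b = [:0, 3 * k * a * b, - 3 / 2 * k * (a + b), k:]"

lemma poly_crit_cubic_0 [simp]: "poly (crit_cubic k a b) 0 = 0"
  by (simp add: crit_cubic_def)

lemma poly_pderiv_crit_cubic: "poly (pderiv (crit_cubic k a b)) x = 3 * k * (x - a) * (x - b)"
  by (simp add: crit_cubic_def pderiv_pCons algebra_simps)

lemma degree_crit_cubic: "k \<noteq> 0 \<Longrightarrow> degree (crit_cubic k a b) = 3"
  by (simp add: crit_cubic_def)

lemma crit_cubic_drop:
  "2 * (poly (crit_cubic k a b) a - poly (crit_cubic k a b) b) = k * (b - a) ^ 3"
  by (simp add: crit_cubic_def field_simps power2_eq_square power3_eq_cube)

lemma crit_cubic_rise_left:
  assumes "a < b"
  shows "2 * (poly (crit_cubic k a b) a - poly (crit_cubic k a b) t) =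
    k * (b - a) ^ 3 * rise ((a - t) / (b - a))"
proof -
  define d s where "d = b - a" and "s = (a - t) / d"
  then have b: "b = a + d" and t: "t = a - s * d"
    using assms by simp_all
  show ?thesis
    unfolding d_def [symmetric] s_def [symmetric] b t
    by (simp add: crit_cubic_def rise_def field_simps power2_eq_square power3_eq_cube)
qed

lemma crit_cubic_rise_right:
  assumes "a < b"
  shows "2 * (poly (crit_cubic k a b) t - poly (crit_cubic k a b) b) =
    k * (b - a) ^ 3 * rise ((t - b) / (b - a))"
proof -
  define d s where "d = b - a" and "s = (t - b) / d"
  then have b: "b = a + d" and t: "t = a + d + s * d"
    using assms by simp_all
  show ?thesis
    unfolding d_def [symmetric] s_def [symmetric] b t
    by (simp add: crit_cubic_def rise_def field_simps power2_eq_square power3_eq_cube)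
qed

lemma degree_le_3_eq_pCons:
  fixes p :: "'a::zero poly"
  assumes "degree p \<le> 3"
  shows "p = [:coeff p 0, coeff p 1, coeff p 2, coeff p 3:]"
proof (rule poly_eqI)
  fix n
  show "coeff p n = coeff [:coeff p 0, coeff p 1, coeff p 2, coeff p 3:] n"
  proof (cases "n \<le> 3")
    case True
    then have "n = 0 \<or> n = 1 \<or> n = 2 \<or> n = 3"
      by auto
    then show ?thesis
      by (auto simp: numeral_eq_Suc)
  next
    case False
    then show ?thesis
      using assms by (simp add: coeff_eq_0 coeff_pCons split: nat.split)
  qed
qed

lemma cubic_eq_crit_cubic:
  fixes f :: "real poly"
  assumes "degree f = 3" "poly f 0 = 0" "a \<noteq> b"
    and "poly (pderiv f) a = 0" "poly (pderiv f) b = 0"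
  shows "f = crit_cubic (lead_coeff f) a b"
proof -
  define p q k where "p = coeff f 1" and "q = coeff f 2" and "k = coeff f 3"
  have "f = [:coeff f 0, p, q, k:]"
    using degree_le_3_eq_pCons [of f] assms(1) by (simp add: p_def q_def k_def)
  moreover have "coeff f 0 = 0"
    using assms(2) by (simp add: poly_0_coeff_0)
  ultimately have f: "f = [:0, p, q, k:]"
    by simp
  have "p + 2 * q * x + 3 * k * x ^ 2 = 0" if "poly (pderiv f) x = 0" for x
    using that by (simp add: f pderiv_pCons algebra_simps power2_eq_square)
  then have pa: "p + 2 * q * a + 3 * k * a ^ 2 = 0" and pb: "p + 2 * q * b + 3 * k * b ^ 2 = 0"
    using assms(4,5) by blast+
  then have "(a - b) * (2 * q + 3 * k * (a + b)) = 0"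
    by (simp add: algebra_simps power2_eq_square)
  then have "q = - 3 / 2 * k * (a + b)"
    using assms(3) by simp
  moreover from this have "p = 3 * k * a * b"
    using pa by (simp add: algebra_simps power2_eq_square)
  moreover have "lead_coeff f = k"
    using assms(1) by (simp add: k_def)
  ultimately show ?thesis
    by (simp add: f crit_cubic_def)
qed

definition cubic_with_critical_values :: "real \<Rightarrow> real \<Rightarrow> real poly \<Rightarrow> bool" where
  "cubic_with_critical_values v1 v2 f \<longleftrightarrow>
     degree f = 3 \<and> poly f 0 = 0 \<and> poly f 1 = 1 \<and>
     (\<exists>c1 c2. 0 < c1 \<and> c1 < c2 \<and> c2 < 1 \<and>
        poly (pderiv f) c1 = 0 \<and> poly (pderiv f) c2 = 0 \<and>
        poly f c1 = v1 \<and> poly f c2 = v2)"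

text \<open>x and y are the lengths of [0, c1] and [c2, 1] in units of c2 - c1.\<close>

definition cubic_of_gaps :: "real \<Rightarrow> real \<Rightarrow> real \<Rightarrow> real \<Rightarrow> real poly" where
  "cubic_of_gaps v1 v2 x y =
     (let d = 1 / (1 + x + y) in crit_cubic (2 * (v1 - v2) / d ^ 3) (x * d) (x * d + d))"

lemma cubic_with_critical_values_imp_gaps:
  assumes "v2 < v1" and "cubic_with_critical_values v1 v2 f"
  obtains x y where "0 < x" "0 < y" "rise x = v1 / (v1 - v2)" "rise y = (1 - v2) / (v1 - v2)"
    and "f = cubic_of_gaps v1 v2 x y"
proof -
  obtain c1 c2 where deg: "degree f = 3" and f0: "poly f 0 = 0" and f1: "poly f 1 = 1"
    and c: "0 < c1" "c1 < c2" "c2 < 1"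
    and crit: "poly (pderiv f) c1 = 0" "poly (pderiv f) c2 = 0"
    and v: "poly f c1 = v1" "poly f c2 = v2"
    using assms(2) unfolding cubic_with_critical_values_def by blast
  define k d x y where "k = lead_coeff f" and "d = c2 - c1"
    and "x = c1 / d" and "y = (1 - c2) / d"
  have f: "f = crit_cubic k c1 c2"
    using cubic_eq_crit_cubic [OF deg f0 _ crit] c by (simp add: k_def)
  have "d > 0"
    using c by (simp add: d_def)
  have drop: "k * d ^ 3 = 2 * (v1 - v2)"
    using crit_cubic_drop [of k c1 c2] by (simp add: f [symmetric] v d_def)
  have "k * d ^ 3 * rise x = 2 * v1"
    using crit_cubic_rise_left [OF \<open>c1 < c2\<close>, of k 0]
    by (simp add: f [symmetric] f0 v d_def x_def)
  then have rise_x: "rise x = v1 / (v1 - v2)"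
    using assms(1) by (simp add: drop field_simps)
  have "k * d ^ 3 * rise y = 2 * (1 - v2)"
    using crit_cubic_rise_right [OF \<open>c1 < c2\<close>, of k 1]
    by (simp add: f [symmetric] f1 v d_def y_def)
  then have rise_y: "rise y = (1 - v2) / (v1 - v2)"
    using assms(1) by (simp add: drop field_simps)
  have "1 / (1 + x + y) = d"
    using \<open>d > 0\<close> by (simp add: x_def y_def d_def field_simps)
  moreover have "k = 2 * (v1 - v2) / d ^ 3"
    using drop \<open>d > 0\<close> by (simp add: field_simps)
  ultimately have "f = cubic_of_gaps v1 v2 x y"
    using \<open>d > 0\<close> by (simp add: cubic_of_gaps_def f x_def d_def)
  moreover have "0 < x" "0 < y"
    using c \<open>d > 0\<close> by (simp_all add: x_def y_def)
  ultimately show thesis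
    using rise_x rise_y that by blast
qed

lemma cubic_of_gaps_has_critical_values:
  assumes "v2 < v1" "0 < x" "0 < y"
    and rise_x: "rise x = v1 / (v1 - v2)" and rise_y: "rise y = (1 - v2) / (v1 - v2)"
  shows "cubic_with_critical_values v1 v2 (cubic_of_gaps v1 v2 x y)"
proof -
  define d c1 c2 k where "d = 1 / (1 + x + y)" and "c1 = x * d" and "c2 = x * d + d"
    and "k = 2 * (v1 - v2) / d ^ 3"
  define f where "f = crit_cubic k c1 c2"
  have "d > 0"
    using assms(2,3) by (simp add: d_def)
  have drop: "k * d ^ 3 = 2 * (v1 - v2)"
    using \<open>d > 0\<close> by (simp add: k_def)
  then have "k \<noteq> 0"
    using assms(1) by auto
  have c: "0 < c1" "c1 < c2" "1 - c2 = y * d"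
    using assms(2,3) \<open>d > 0\<close> by (simp_all add: c1_def c2_def d_def field_simps)
  have "c2 < 1"
    using c(3) mult_pos_pos [OF assms(3) \<open>d > 0\<close>] by linarith
  have d: "c2 - c1 = d"
    by (simp add: c1_def c2_def)
  have "c1 / d = x"
    using \<open>d > 0\<close> by (simp add: c1_def)
  then have "2 * poly f c1 = k * d ^ 3 * rise x"
    using crit_cubic_rise_left [OF \<open>c1 < c2\<close>, of k 0] by (simp add: f_def d)
  moreover have "k * d ^ 3 * rise x = 2 * v1"
    using assms(1) by (simp add: drop rise_x field_simps)
  ultimately have v1: "poly f c1 = v1"
    by simp
  then have v2: "poly f c2 = v2"
    using crit_cubic_drop [of k c1 c2] by (simp add: f_def [symmetric] d drop)
  have "2 * (poly f 1 - poly f c2) = k * d ^ 3 * rise y"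
    using crit_cubic_rise_right [OF \<open>c1 < c2\<close>, of k 1] \<open>d > 0\<close>
    by (simp add: f_def d c)
  moreover have "k * d ^ 3 * rise y = 2 * (1 - v2)"
    using assms(1) by (simp add: drop rise_y field_simps)
  ultimately have "poly f 1 = 1"
    by (simp add: v2)
  moreover have "degree f = 3"
    using \<open>k \<noteq> 0\<close> by (simp add: f_def degree_crit_cubic)
  moreover have "0 < c1 \<and> c1 < c2 \<and> c2 < 1 \<and>
      poly (pderiv f) c1 = 0 \<and> poly (pderiv f) c2 = 0 \<and> poly f c1 = v1 \<and> poly f c2 = v2"
    using c \<open>c2 < 1\<close> v1 v2 by (simp add: f_def poly_pderiv_crit_cubic)
  ultimately have "cubic_with_critical_values v1 v2 f"
    unfolding cubic_with_critical_values_def by (auto simp: f_def)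
  then show ?thesis
    by (simp add: f_def cubic_of_gaps_def Let_def d_def c1_def c2_def k_def)
qed

theorem lemma1:
  fixes v1 v2 :: real
  assumes "1 \<ge> v1" and "v1 > v2" and "v2 \<ge> 0"
  shows "\<exists>!f :: real poly.
           degree f = 3 \<and> poly f 0 = 0 \<and> poly f 1 = 1 \<and>
           (\<exists>c1 c2. 0 < c1 \<and> c1 < c2 \<and> c2 < 1 \<and>
              poly (pderiv f) c1 = 0 \<and> poly (pderiv f) c2 = 0 \<and>
              poly f c1 = v1 \<and> poly f c2 = v2)"
proof -
  obtain x where x: "0 < x" "rise x = v1 / (v1 - v2)"
    using rise_surj_pos [of "v1 / (v1 - v2)"] assms by auto
  obtain y where y: "0 < y" "rise y = (1 - v2) / (v1 - v2)"
    using rise_surj_pos [of "(1 - v2) / (v1 - v2)"] assms by auto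
  have "\<exists>!f. cubic_with_critical_values v1 v2 f"
  proof
    show "cubic_with_critical_values v1 v2 (cubic_of_gaps v1 v2 x y)"
      using cubic_of_gaps_has_critical_values [OF assms(2) x(1) y(1) x(2) y(2)] .
  next
    fix f
    assume "cubic_with_critical_values v1 v2 f"
    then obtain x' y' where "0 < x'" "0 < y'" "rise x' = rise x" "rise y' = rise y"
      and f: "f = cubic_of_gaps v1 v2 x' y'"
      using cubic_with_critical_values_imp_gaps assms(2) x y by metis
    then have "x' = x" "y' = y"
      using x(1) y(1) inj_onD [OF inj_on_rise] by simp_all
    then show "f = cubic_of_gaps v1 v2 x y"
      by (simp add: f)
  qed
  then show ?thesis
    unfolding cubic_with_critical_values_def .
qed

end
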